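(* Let $\mathcal{G}$ be a bottleneck routing game and let $f$ be any subpath-optimal Nash flow of $\mathcal{G}$. Then $B(f)=B^*(\mathcal{G})$.
   Context: A bottleneck routing game is $\mathcal{G}=(G(V,E),(c_e)_{e\in E},r)$: $G$ is a directed network with origin $s$ and destination $t$, each edge $e$ has a continuous non-decreasing latency function $c_e:[0,r]\to\mathbb{R}_{\ge0}$, and $r>0$ is the traffic rate. A flow is a nonnegative vector $f$ indexed by the simple $s$–$t$ paths with $\sum_p f_p=r$; $f_e=\sum_{p\ni e}f_p$; $b_p(f)=\max_{e\in p}c_e(f_e)$ for any path $p$; $B(f)=\max_{p:f_p>0}b_p(f)$. $B^*(\mathcal{G})=\min_f B(f)$ over feasible flows. $f$ is a Nash flow if for all $s$–$t$ paths $p,p'$ with $f_p>0$, $b_p(f)\le b_{p'}(f)$. For a flow $f$ and vertex $u$, $b_f(u)$ denotes the minimum over all $s$–$u$ paths $q$ of $\max_{e\in q}c_e(f_e)$. A flow $f$ is a subpath-optimal Nash flow if it is a Nash flow and for every vertex $u$ and every $s$–$t$ path $p$ with $f_p>0$ containing $u$, the bottleneck cost $\max_e c_e(f_e)$ over the edges of the $s$–$u$ part of $p$ equals $b_f(u)$. *)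

theory Defs
  imports "HOL-Analysis.Analysis"
begin

(* Network: edge type 'e (parallel edges allowed), finite edge set E,
   tail function src and head function dst mapping edges to vertices of type 'v. *)

fun walk :: "'e set \<Rightarrow> ('e \<Rightarrow> 'v) \<Rightarrow> ('e \<Rightarrow> 'v) \<Rightarrow> 'v \<Rightarrow> 'e list \<Rightarrow> 'v \<Rightarrow> bool" where
  "walk E src dst x [] y = (x = y)"
| "walk E src dst x (e # es) y = (e \<in> E \<and> src e = x \<and> walk E src dst (dst e) es y)"

fun vseq :: "('e \<Rightarrow> 'v) \<Rightarrow> 'v \<Rightarrow> 'e list \<Rightarrow> 'v list" where
  "vseq dst x [] = [x]"
| "vseq dst x (e # es) = x # vseq dst (dst e) es"

definition spath :: "'e set \<Rightarrow> ('e \<Rightarrow> 'v) \<Rightarrow> ('e \<Rightarrow> 'v) \<Rightarrow> 'v \<Rightarrow> 'e list \<Rightarrow> 'v \<Rightarrow> bool" where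
  "spath E src dst x p y \<longleftrightarrow> walk E src dst x p y \<and> distinct (vseq dst x p)"

definition stpaths :: "'e set \<Rightarrow> ('e \<Rightarrow> 'v) \<Rightarrow> ('e \<Rightarrow> 'v) \<Rightarrow> 'v \<Rightarrow> 'v \<Rightarrow> 'e list set" where
  "stpaths E src dst s t = {p. spath E src dst s p t}"

definition bottleneck_game :: "'e set \<Rightarrow> ('e \<Rightarrow> real \<Rightarrow> real) \<Rightarrow> real \<Rightarrow> bool" where
  "bottleneck_game E c r \<longleftrightarrow> finite E \<and> r > 0 \<and>
     (\<forall>e\<in>E. continuous_on {0..r} (c e) \<and> mono_on {0..r} (c e) \<and> (\<forall>x\<in>{0..r}. 0 \<le> c e x))"

definition is_flow :: "'e set \<Rightarrow> ('e \<Rightarrow> 'v) \<Rightarrow> ('e \<Rightarrow> 'v) \<Rightarrow> 'v \<Rightarrow> 'v \<Rightarrow> real \<Rightarrow> ('e list \<Rightarrow> real) \<Rightarrow> bool" where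
  "is_flow E src dst s t r f \<longleftrightarrow> (\<forall>p. 0 \<le> f p) \<and> (\<forall>p. f p \<noteq> 0 \<longrightarrow> p \<in> stpaths E src dst s t)
      \<and> sum f (stpaths E src dst s t) = r"

definition edge_flow :: "'e set \<Rightarrow> ('e \<Rightarrow> 'v) \<Rightarrow> ('e \<Rightarrow> 'v) \<Rightarrow> 'v \<Rightarrow> 'v \<Rightarrow> ('e list \<Rightarrow> real) \<Rightarrow> 'e \<Rightarrow> real" where
  "edge_flow E src dst s t f e = sum f {p \<in> stpaths E src dst s t. e \<in> set p}"

(* bottleneck cost max_{e in q} c_e(f_e) of an edge list q; the empty list has cost 0
   (latencies are nonnegative, so inserting 0 does not change nonempty maxima) *)
definition bcost :: "'e set \<Rightarrow> ('e \<Rightarrow> 'v) \<Rightarrow> ('e \<Rightarrow> 'v) \<Rightarrow> 'v \<Rightarrow> 'v \<Rightarrow> ('e \<Rightarrow> real \<Rightarrow> real) \<Rightarrow> ('e list \<Rightarrow> real) \<Rightarrow> 'e list \<Rightarrow> real" where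
  "bcost E src dst s t c f q = Max (insert 0 ((\<lambda>e. c e (edge_flow E src dst s t f e)) ` set q))"

definition Bf :: "'e set \<Rightarrow> ('e \<Rightarrow> 'v) \<Rightarrow> ('e \<Rightarrow> 'v) \<Rightarrow> 'v \<Rightarrow> 'v \<Rightarrow> ('e \<Rightarrow> real \<Rightarrow> real) \<Rightarrow> ('e list \<Rightarrow> real) \<Rightarrow> real" where
  "Bf E src dst s t c f = Max {bcost E src dst s t c f p | p. p \<in> stpaths E src dst s t \<and> f p > 0}"

definition Bstar :: "'e set \<Rightarrow> ('e \<Rightarrow> 'v) \<Rightarrow> ('e \<Rightarrow> 'v) \<Rightarrow> 'v \<Rightarrow> 'v \<Rightarrow> ('e \<Rightarrow> real \<Rightarrow> real) \<Rightarrow> real \<Rightarrow> real" where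
  "Bstar E src dst s t c r = Inf {Bf E src dst s t c g | g. is_flow E src dst s t r g}"

definition nash_flow :: "'e set \<Rightarrow> ('e \<Rightarrow> 'v) \<Rightarrow> ('e \<Rightarrow> 'v) \<Rightarrow> 'v \<Rightarrow> 'v \<Rightarrow> ('e \<Rightarrow> real \<Rightarrow> real) \<Rightarrow> real \<Rightarrow> ('e list \<Rightarrow> real) \<Rightarrow> bool" where
  "nash_flow E src dst s t c r f \<longleftrightarrow> is_flow E src dst s t r f \<and>
     (\<forall>p\<in>stpaths E src dst s t. \<forall>p'\<in>stpaths E src dst s t. f p > 0 \<longrightarrow>
        bcost E src dst s t c f p \<le> bcost E src dst s t c f p')"

definition bvert :: "'e set \<Rightarrow> ('e \<Rightarrow> 'v) \<Rightarrow> ('e \<Rightarrow> 'v) \<Rightarrow> 'v \<Rightarrow> 'v \<Rightarrow> ('e \<Rightarrow> real \<Rightarrow> real) \<Rightarrow> ('e list \<Rightarrow> real) \<Rightarrow> 'v \<Rightarrow> real" where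
  "bvert E src dst s t c f u = Inf {bcost E src dst s t c f q | q. spath E src dst s q u}"

(* subpath-optimal Nash flow: for every used path p and every vertex u on p
   (the endpoint of the prefix take k p), the prefix s-u has bottleneck b_f(u) *)
definition subpath_optimal_nash :: "'e set \<Rightarrow> ('e \<Rightarrow> 'v) \<Rightarrow> ('e \<Rightarrow> 'v) \<Rightarrow> 'v \<Rightarrow> 'v \<Rightarrow> ('e \<Rightarrow> real \<Rightarrow> real) \<Rightarrow> real \<Rightarrow> ('e list \<Rightarrow> real) \<Rightarrow> bool" where
  "subpath_optimal_nash E src dst s t c r f \<longleftrightarrow> nash_flow E src dst s t c r f \<and>
     (\<forall>p\<in>stpaths E src dst s t. f p > 0 \<longrightarrow> (\<forall>k\<le>length p.
        bcost E src dst s t c f (take k p) = bvert E src dst s t c f (last (vseq dst s (take k p)))))"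

end

theory Submission
  imports Defs
begin

text \<open>
Let \<open>B = B(f)\<close> and let \<open>S\<close> be the set of vertices reachable from \<open>s\<close> by a simple path of
bottleneck cost below \<open>B\<close> under \<open>f\<close>. Then \<open>s \<in> S\<close>, the Nash property gives \<open>t \<notin> S\<close>, and
every edge leaving \<open>S\<close> has cost at least \<open>B\<close>. By subpath optimality a path used by \<open>f\<close>
leaves \<open>S\<close> only once, whereas every \<open>s\<close>-\<open>t\<close> path leaves \<open>S\<close> at least once. Counting flow
across the cut, any other flow \<open>g\<close> puts at least as much flow as \<open>f\<close> on some cut edge it
uses, so by monotonicity of the latencies \<open>B(g) \<ge> B\<close>.
\<close>

lemma vseq_conv: "vseq dst x p = x # map dst p"
  by (induction p arbitrary: x) auto

lemma walk_take: "walk E src dst x p y \<Longrightarrow> walk E src dst x (take k p) (last (vseq dst x (take k p)))"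
  by (induction p arbitrary: x k) (auto simp: vseq_conv take_Cons split: nat.split)

lemma last_vseq_take_nth:
  "walk E src dst x p y \<Longrightarrow> k < length p \<Longrightarrow> last (vseq dst x (take k p)) = src (p ! k)"
  by (induction p arbitrary: x k) (auto simp: vseq_conv take_Cons nth_Cons split: nat.split)

lemma walk_snoc:
  "walk E src dst x q y \<Longrightarrow> e \<in> E \<Longrightarrow> src e = y \<Longrightarrow> walk E src dst x (q @ [e]) (dst e)"
  by (induction q arbitrary: x) auto

lemma walk_edges_subset: "walk E src dst x q y \<Longrightarrow> set q \<subseteq> E"
  by (induction q arbitrary: x) auto

lemma walk_leaves_set:
  "walk E src dst x p y \<Longrightarrow> x \<in> S \<Longrightarrow> y \<notin> S \<Longrightarrow> \<exists>e\<in>set p. e \<in> E \<and> src e \<in> S \<and> dst e \<notin> S"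
  by (induction p arbitrary: x) auto

lemma in_vseq_imp_take: "w \<in> set (vseq dst x q) \<Longrightarrow> \<exists>k\<le>length q. last (vseq dst x (take k q)) = w"
proof -
  assume "w \<in> set (vseq dst x q)"
  then consider "w = x" | i where "i < length q" "w = dst (q ! i)"
    by (auto simp: vseq_conv in_set_conv_nth)
  then show ?thesis
  proof cases
    case 1
    then show ?thesis by (intro exI[of _ 0]) (simp add: vseq_conv)
  next
    case 2
    then show ?thesis by (intro exI[of _ "Suc i"]) (simp add: vseq_conv take_Suc_conv_app_nth)
  qed
qed

lemma spath_take: "spath E src dst x p y \<Longrightarrow> spath E src dst x (take k p) (last (vseq dst x (take k p)))"
proof -
  assume "spath E src dst x p y"
  moreover have "vseq dst x (take k p) = take (Suc k) (vseq dst x p)"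
    by (simp add: vseq_conv take_map)
  ultimately show ?thesis
    unfolding spath_def by (metis walk_take distinct_take)
qed

lemma spath_snoc:
  assumes "spath E src dst x q y" "e \<in> E" "src e = y" "dst e \<notin> set (vseq dst x q)"
  shows "spath E src dst x (q @ [e]) (dst e)"
  using assms walk_snoc[of E src dst x q y e] unfolding spath_def by (auto simp: vseq_conv)

lemma finite_stpaths: "finite E \<Longrightarrow> finite (stpaths E src dst s t)"
proof (rule finite_subset[OF _ finite_subset_distinct])
  show "stpaths E src dst s t \<subseteq> {xs. set xs \<subseteq> E \<and> distinct xs}"
    unfolding stpaths_def spath_def by (auto dest: walk_edges_subset simp: vseq_conv distinct_map)
qed

lemma card_inter_set_le_1:
  assumes "\<And>i j. i < j \<Longrightarrow> j < length p \<Longrightarrow> p ! i \<in> C \<Longrightarrow> p ! j \<notin> C"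
  shows "card (C \<inter> set p) \<le> 1"
proof -
  have "a = b" if ha: "a \<in> C \<inter> set p" and hb: "b \<in> C \<inter> set p" for a b
  proof -
    obtain i where "i < length p" "p ! i = a"
      using ha by (metis IntD2 in_set_conv_nth)
    moreover obtain j where "j < length p" "p ! j = b"
      using hb by (metis IntD2 in_set_conv_nth)
    ultimately show "a = b"
      using assms[of i j] assms[of j i] ha hb by (cases i j rule: linorder_cases) auto
  qed
  then show ?thesis by (simp add: card_le_Suc0_iff_eq)
qed

lemma bcost_nonneg: "0 \<le> bcost E src dst s t c f q"
  unfolding bcost_def by (rule Max_ge) auto

lemma bcost_ge: "e \<in> set q \<Longrightarrow> c e (edge_flow E src dst s t f e) \<le> bcost E src dst s t c f q"
  unfolding bcost_def by (rule Max_ge) auto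

lemma bcost_mono: "set q \<subseteq> set q' \<Longrightarrow> bcost E src dst s t c f q \<le> bcost E src dst s t c f q'"
  unfolding bcost_def by (rule Max_mono) auto

lemma bcost_Nil: "bcost E src dst s t c f [] = 0"
  unfolding bcost_def by simp

lemma bcost_snoc:
  "bcost E src dst s t c f (q @ [e]) = max (c e (edge_flow E src dst s t f e)) (bcost E src dst s t c f q)"
proof -
  let ?c = "\<lambda>e. c e (edge_flow E src dst s t f e)"
  have "bcost E src dst s t c f (q @ [e]) = Max (insert (?c e) (insert 0 (?c ` set q)))"
    unfolding bcost_def by (simp add: insert_commute)
  then show ?thesis
    unfolding bcost_def by (subst (asm) Max_insert) auto
qed

lemma bvert_le: "spath E src dst s q u \<Longrightarrow> bvert E src dst s t c f u \<le> bcost E src dst s t c f q"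
  unfolding bvert_def
  by (rule cInf_lower) (auto intro: bdd_belowI[where m=0] simp: bcost_nonneg)

lemma Bf_conv_Max_image:
  "Bf E src dst s t c g = Max (bcost E src dst s t c g ` {p \<in> stpaths E src dst s t. g p > 0})"
  unfolding Bf_def by (rule arg_cong[where f = Max]) auto

lemma bcost_le_Bf:
  assumes "finite E" "p \<in> stpaths E src dst s t" "g p > 0"
  shows "bcost E src dst s t c g p \<le> Bf E src dst s t c g"
  unfolding Bf_conv_Max_image using finite_stpaths[OF assms(1), of src dst s t] assms(2,3)
  by (intro Max_ge) auto

lemma flow_has_used_path:
  assumes "is_flow E src dst s t r g" "r > 0"
  obtains p where "p \<in> stpaths E src dst s t" "g p > 0"
proof -
  have "\<exists>p\<in>stpaths E src dst s t. g p \<noteq> 0"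
  proof (rule ccontr)
    assume "\<not> ?thesis"
    then have "sum g (stpaths E src dst s t) = 0" by simp
    with assms show False unfolding is_flow_def by simp
  qed
  moreover have "\<And>p. 0 \<le> g p" using assms(1) unfolding is_flow_def by blast
  ultimately show ?thesis using that by (auto simp: less_le)
qed

lemma Bf_attained:
  assumes "finite E" "is_flow E src dst s t r g" "r > 0"
  obtains p where "p \<in> stpaths E src dst s t" "g p > 0" "bcost E src dst s t c g p = Bf E src dst s t c g"
proof -
  let ?A = "{p \<in> stpaths E src dst s t. g p > 0}"
  obtain p0 where "p0 \<in> stpaths E src dst s t" "g p0 > 0"
    using flow_has_used_path[OF assms(2,3)] .
  then have "bcost E src dst s t c g ` ?A \<noteq> {}" by blast
  moreover have "finite (bcost E src dst s t c g ` ?A)"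
    using finite_stpaths[OF assms(1), of src dst s t] by simp
  ultimately have "Bf E src dst s t c g \<in> bcost E src dst s t c g ` ?A"
    unfolding Bf_conv_Max_image by (rule Max_in[rotated])
  then obtain p where "p \<in> ?A" "bcost E src dst s t c g p = Bf E src dst s t c g" by auto
  then show ?thesis using that by blast
qed

lemma edge_flow_nonneg: "is_flow E src dst s t r g \<Longrightarrow> 0 \<le> edge_flow E src dst s t g e"
  unfolding edge_flow_def is_flow_def by (auto intro: sum_nonneg)

lemma edge_flow_le: "finite E \<Longrightarrow> is_flow E src dst s t r g \<Longrightarrow> edge_flow E src dst s t g e \<le> r"
  unfolding edge_flow_def is_flow_def
  by (metis (no_types, lifting) finite_stpaths mem_Collect_eq subsetI sum_mono2)

lemma edge_flow_pos_imp_used_path: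
  assumes "is_flow E src dst s t r g" "edge_flow E src dst s t g e > 0"
  obtains p where "p \<in> stpaths E src dst s t" "e \<in> set p" "g p > 0"
proof -
  have "\<exists>p\<in>{p \<in> stpaths E src dst s t. e \<in> set p}. g p \<noteq> 0"
  proof (rule ccontr)
    assume "\<not> ?thesis"
    then have "edge_flow E src dst s t g e = 0" unfolding edge_flow_def by simp
    with assms(2) show False by simp
  qed
  moreover have "\<And>p. 0 \<le> g p" using assms(1) unfolding is_flow_def by blast
  ultimately show ?thesis using that by (auto simp: less_le)
qed

lemma sum_edge_flow_eq:
  assumes "finite E" "finite C"
  shows "(\<Sum>e\<in>C. edge_flow E src dst s t g e) = (\<Sum>p\<in>stpaths E src dst s t. g p * card (C \<inter> set p))"
proof -
  have "(\<Sum>e\<in>C. edge_flow E src dst s t g e)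
      = (\<Sum>p\<in>stpaths E src dst s t. \<Sum>e\<in>C. if e \<in> set p then g p else 0)"
    unfolding edge_flow_def
    by (simp add: sum.inter_filter finite_stpaths[OF assms(1)] sum.swap[of _ C])
  also have "\<dots> = (\<Sum>p\<in>stpaths E src dst s t. g p * card (C \<inter> set p))"
    using assms(2) by (simp add: sum.If_cases Int_def mult.commute)
  finally show ?thesis .
qed

lemma sum_edge_flow_le_rate:
  assumes "finite E" "finite C" and f: "is_flow E src dst s t r f"
    and once: "\<And>p. p \<in> stpaths E src dst s t \<Longrightarrow> f p > 0 \<Longrightarrow> card (C \<inter> set p) \<le> 1"
  shows "(\<Sum>e\<in>C. edge_flow E src dst s t f e) \<le> r"
proof -
  have term_le: "f p * card (C \<inter> set p) \<le> f p" if "p \<in> stpaths E src dst s t" for p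
  proof (cases "f p > 0")
    case True
    then show ?thesis using once[OF that] by (simp add: mult_le_cancel_left1)
  next
    case False
    with f have "f p = 0" unfolding is_flow_def by (meson antisym not_less)
    then show ?thesis by simp
  qed
  have "(\<Sum>e\<in>C. edge_flow E src dst s t f e) = (\<Sum>p\<in>stpaths E src dst s t. f p * card (C \<inter> set p))"
    by (rule sum_edge_flow_eq[OF assms(1,2)])
  also have "\<dots> \<le> (\<Sum>p\<in>stpaths E src dst s t. f p)" using term_le by (rule sum_mono)
  also have "\<dots> = r" using f unfolding is_flow_def by simp
  finally show ?thesis .
qed

lemma rate_le_sum_edge_flow:
  assumes "finite E" "finite C" and g: "is_flow E src dst s t r g"
    and meets: "\<And>p. p \<in> stpaths E src dst s t \<Longrightarrow> C \<inter> set p \<noteq> {}"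
  shows "r \<le> (\<Sum>e\<in>C. edge_flow E src dst s t g e)"
proof -
  have term_ge: "g p \<le> g p * card (C \<inter> set p)" if "p \<in> stpaths E src dst s t" for p
  proof -
    have "1 \<le> card (C \<inter> set p)"
      using meets[OF that] by (simp add: Suc_le_eq card_gt_0_iff)
    moreover have "0 \<le> g p" using g unfolding is_flow_def by blast
    ultimately show ?thesis by (simp add: mult_le_cancel_left1)
  qed
  have "r = (\<Sum>p\<in>stpaths E src dst s t. g p)" using g unfolding is_flow_def by simp
  also have "\<dots> \<le> (\<Sum>p\<in>stpaths E src dst s t. g p * card (C \<inter> set p))"
    using term_ge by (rule sum_mono)
  also have "\<dots> = (\<Sum>e\<in>C. edge_flow E src dst s t g e)"
    by (rule sum_edge_flow_eq[OF assms(1,2), symmetric])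
  finally show ?thesis .
qed

lemma exists_pos_le_of_sum_le:
  fixes a b :: "'a \<Rightarrow> real"
  assumes "finite C" "sum a C \<le> sum b C" "0 < sum b C" "\<And>x. 0 \<le> a x"
  shows "\<exists>x\<in>C. 0 < b x \<and> a x \<le> b x"
proof (rule ccontr)
  assume "\<not> ?thesis"
  then have lt: "b x < a x" if "x \<in> C" "0 < b x" for x
    using that by (meson not_le)
  have "\<forall>x\<in>C. b x \<le> a x"
  proof
    fix x assume "x \<in> C"
    then show "b x \<le> a x" using lt[of x] assms(4)[of x] by (cases "0 < b x") auto
  qed
  moreover have "\<exists>x\<in>C. 0 < b x"
    using assms(3) by (meson not_le sum_nonpos)
  ultimately have "sum b C < sum a C"
    using lt by (intro sum_strict_mono_ex1[OF assms(1)]) auto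
  with assms(2) show False by linarith
qed

lemma cut_edge_flow_le:
  assumes "finite E" "r > 0" "finite C"
    and f: "is_flow E src dst s t r f" and g: "is_flow E src dst s t r g"
    and "\<And>p. p \<in> stpaths E src dst s t \<Longrightarrow> C \<inter> set p \<noteq> {}"
    and "\<And>p. p \<in> stpaths E src dst s t \<Longrightarrow> f p > 0 \<Longrightarrow> card (C \<inter> set p) \<le> 1"
  obtains e where "e \<in> C" "edge_flow E src dst s t g e > 0"
    "edge_flow E src dst s t f e \<le> edge_flow E src dst s t g e"
proof -
  have "(\<Sum>e\<in>C. edge_flow E src dst s t f e) \<le> r"
    using sum_edge_flow_le_rate assms(1,3,4,7) .
  moreover have "r \<le> (\<Sum>e\<in>C. edge_flow E src dst s t g e)"
    using rate_le_sum_edge_flow assms(1,3,5,6) .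
  ultimately have "\<exists>e\<in>C. 0 < edge_flow E src dst s t g e \<and> edge_flow E src dst s t f e \<le> edge_flow E src dst s t g e"
    using \<open>r > 0\<close> edge_flow_nonneg[OF f] by (intro exists_pos_le_of_sum_le[OF assms(3)]) auto
  then show ?thesis using that by blast
qed

section \<open>The cut of cheaply reachable vertices\<close>

definition leaving_edges :: "'e set \<Rightarrow> ('e \<Rightarrow> 'v) \<Rightarrow> ('e \<Rightarrow> 'v) \<Rightarrow> 'v set \<Rightarrow> 'e set"
  where "leaving_edges E src dst S = {e \<in> E. src e \<in> S \<and> dst e \<notin> S}"

lemma finite_leaving_edges: "finite E \<Longrightarrow> finite (leaving_edges E src dst S)"
  unfolding leaving_edges_def by simp

lemma stpath_meets_leaving_edges:
  assumes "s \<in> S" "t \<notin> S" "p \<in> stpaths E src dst s t"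
  shows "leaving_edges E src dst S \<inter> set p \<noteq> {}"
  using assms walk_leaves_set[of E src dst s p t S]
  unfolding leaving_edges_def stpaths_def spath_def by blast

definition cheap_vertices ::
  "'e set \<Rightarrow> ('e \<Rightarrow> 'v) \<Rightarrow> ('e \<Rightarrow> 'v) \<Rightarrow> 'v \<Rightarrow> 'v \<Rightarrow> ('e \<Rightarrow> real \<Rightarrow> real) \<Rightarrow> ('e list \<Rightarrow> real) \<Rightarrow> real \<Rightarrow> 'v set"
  where "cheap_vertices E src dst s t c f b = {u. \<exists>q. spath E src dst s q u \<and> bcost E src dst s t c f q < b}"

lemma source_cheap: "b > 0 \<Longrightarrow> s \<in> cheap_vertices E src dst s t c f b"
  unfolding cheap_vertices_def spath_def by (auto intro!: exI[of _ "[]"] simp: bcost_Nil)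

lemma target_not_cheap:
  assumes "nash_flow E src dst s t c r f" "finite E" "r > 0"
  shows "t \<notin> cheap_vertices E src dst s t c f (Bf E src dst s t c f)"
proof
  assume "t \<in> cheap_vertices E src dst s t c f (Bf E src dst s t c f)"
  then obtain q where q: "q \<in> stpaths E src dst s t" "bcost E src dst s t c f q < Bf E src dst s t c f"
    unfolding cheap_vertices_def stpaths_def by blast
  have f: "is_flow E src dst s t r f" using assms(1) unfolding nash_flow_def by simp
  obtain p where p: "p \<in> stpaths E src dst s t" "f p > 0" "bcost E src dst s t c f p = Bf E src dst s t c f"
    using Bf_attained[OF assms(2) f assms(3)] .
  have "bcost E src dst s t c f p \<le> bcost E src dst s t c f q"
    using assms(1) p(1,2) q(1) unfolding nash_flow_def by blast
  with p(3) q(2) show False by linarith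
qed

lemma leaving_cheap_vertices_cost:
  assumes "e \<in> leaving_edges E src dst (cheap_vertices E src dst s t c f b)"
  shows "b \<le> c e (edge_flow E src dst s t f e)"
proof -
  have e: "e \<in> E" "src e \<in> cheap_vertices E src dst s t c f b" "dst e \<notin> cheap_vertices E src dst s t c f b"
    using assms unfolding leaving_edges_def by auto
  obtain q where q: "spath E src dst s q (src e)" "bcost E src dst s t c f q < b"
    using e(2) unfolding cheap_vertices_def by blast
  have "dst e \<notin> set (vseq dst s q)"
  proof
    assume "dst e \<in> set (vseq dst s q)"
    then obtain k where "last (vseq dst s (take k q)) = dst e"
      using in_vseq_imp_take by metis
    then have "spath E src dst s (take k q) (dst e)"
      using spath_take[OF q(1), of k] by simp
    moreover have "bcost E src dst s t c f (take k q) < b"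
      using bcost_mono[OF set_take_subset] q(2) by (metis le_less_trans)
    ultimately show False
      using e(3) unfolding cheap_vertices_def by blast
  qed
  then have "spath E src dst s (q @ [e]) (dst e)"
    by (rule spath_snoc[OF q(1) e(1) refl])
  then have "\<not> bcost E src dst s t c f (q @ [e]) < b"
    using e(3) unfolding cheap_vertices_def by blast
  with q(2) show ?thesis by (simp add: bcost_snoc not_less)
qed

text \<open>
A prefix of a used path ending in a cheap vertex has cost below \<open>b\<close> by subpath optimality,
so it cannot contain an edge of cost \<open>\<ge> b\<close>; hence the path never re-enters the cheap set.
\<close>
lemma used_path_leaves_cheap_vertices_once:
  assumes so: "subpath_optimal_nash E src dst s t c r f"
    and p: "p \<in> stpaths E src dst s t" "f p > 0"
  shows "card (leaving_edges E src dst (cheap_vertices E src dst s t c f b) \<inter> set p) \<le> 1"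
proof (rule card_inter_set_le_1)
  let ?L = "leaving_edges E src dst (cheap_vertices E src dst s t c f b)"
  fix i j assume ij: "i < j" "j < length p" "p ! i \<in> ?L"
  show "p ! j \<notin> ?L"
  proof
    assume "p ! j \<in> ?L"
    then obtain q where q: "spath E src dst s q (src (p ! j))" "bcost E src dst s t c f q < b"
      unfolding leaving_edges_def cheap_vertices_def by blast
    have walk: "walk E src dst s p t" using p(1) unfolding stpaths_def spath_def by simp
    have "b \<le> c (p ! i) (edge_flow E src dst s t f (p ! i))"
      by (rule leaving_cheap_vertices_cost[OF ij(3)])
    also have "\<dots> \<le> bcost E src dst s t c f (take j p)"
      using ij(1,2) by (intro bcost_ge) (auto simp: in_set_conv_nth)
    also have "\<dots> = bvert E src dst s t c f (last (vseq dst s (take j p)))"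
      using so p ij(2) unfolding subpath_optimal_nash_def by simp
    also have "\<dots> = bvert E src dst s t c f (src (p ! j))"
      by (simp only: last_vseq_take_nth[OF walk ij(2)])
    also have "\<dots> \<le> bcost E src dst s t c f q"
      by (rule bvert_le[OF q(1)])
    finally show False using q(2) by simp
  qed
qed

lemma subpath_optimal_nash_Bf_le:
  assumes game: "bottleneck_game E c r" and so: "subpath_optimal_nash E src dst s t c r f"
    and g: "is_flow E src dst s t r g"
  shows "Bf E src dst s t c f \<le> Bf E src dst s t c g"
proof -
  let ?B = "Bf E src dst s t c f"
  let ?C = "leaving_edges E src dst (cheap_vertices E src dst s t c f ?B)"
  have fin: "finite E" and "r > 0" and mono: "\<And>e. e \<in> E \<Longrightarrow> mono_on {0..r} (c e)"
    using game unfolding bottleneck_game_def by auto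
  have nash: "nash_flow E src dst s t c r f" and f: "is_flow E src dst s t r f"
    using so unfolding subpath_optimal_nash_def nash_flow_def by auto
  show ?thesis
  proof (cases "?B > 0")
    case False
    obtain p where "p \<in> stpaths E src dst s t" "g p > 0"
      using flow_has_used_path[OF g \<open>r > 0\<close>] .
    with False show ?thesis
      using bcost_le_Bf[where c = c and g = g, OF fin] bcost_nonneg[of E src dst s t c g p] by force
  next
    case True
    have "\<And>p. p \<in> stpaths E src dst s t \<Longrightarrow> ?C \<inter> set p \<noteq> {}"
      using stpath_meets_leaving_edges source_cheap[OF True] target_not_cheap[OF nash fin \<open>r > 0\<close>] .
    then obtain e where e: "e \<in> ?C" "edge_flow E src dst s t g e > 0"
      "edge_flow E src dst s t f e \<le> edge_flow E src dst s t g e"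
      using cut_edge_flow_le[OF fin \<open>r > 0\<close> finite_leaving_edges[OF fin] f g]
        used_path_leaves_cheap_vertices_once[OF so] by blast
    obtain p where p: "p \<in> stpaths E src dst s t" "e \<in> set p" "g p > 0"
      using edge_flow_pos_imp_used_path[OF g e(2)] .
    have "?B \<le> c e (edge_flow E src dst s t f e)"
      by (rule leaving_cheap_vertices_cost[OF e(1)])
    also have "\<dots> \<le> c e (edge_flow E src dst s t g e)"
      using e(1,3) edge_flow_nonneg[OF f, of e] edge_flow_le[OF fin g, of e]
      by (intro mono_onD[OF mono]) (auto simp: leaving_edges_def)
    also have "\<dots> \<le> bcost E src dst s t c g p" by (rule bcost_ge[OF p(2)])
    also have "\<dots> \<le> Bf E src dst s t c g" by (rule bcost_le_Bf[where g = g, OF fin p(1,3)])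
    finally show ?thesis .
  qed
qed

theorem proposition3:
  fixes E :: "'e set" and src dst :: "'e \<Rightarrow> 'v" and s t :: 'v
    and c :: "'e \<Rightarrow> real \<Rightarrow> real" and r :: real and f :: "'e list \<Rightarrow> real"
  assumes "bottleneck_game E c r"
    and "subpath_optimal_nash E src dst s t c r f"
  shows "Bf E src dst s t c f = Bstar E src dst s t c r"
proof -
  have "is_flow E src dst s t r f"
    using assms(2) unfolding subpath_optimal_nash_def nash_flow_def by simp
  then have "Bf E src dst s t c f \<in> {Bf E src dst s t c g | g. is_flow E src dst s t r g}"
    by blast
  moreover have "Bf E src dst s t c f \<le> x" if "x \<in> {Bf E src dst s t c g | g. is_flow E src dst s t r g}" for x
    using that subpath_optimal_nash_Bf_le[OF assms] by blast
  ultimately show ?thesis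
    unfolding Bstar_def by (rule cInf_eq_minimum[symmetric])
qed

end
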